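(* Fix $\varepsilon>0$ and a dataset $D=\{(x_i,y_i)\}_{i=1}^n$ with $x_i,y_i\in[0,1]$. With the noisy statistics and $\tilde n_y$ defined in the context, define $\hat S_{x}:=\frac23\bigl(\tilde S_{x^2}+\tilde S_{x-x^2}\bigr)+\frac13\bigl(\tilde n_y-\tilde S_{1-x}\bigr)$. Then $\hat S_x$ is an unbiased estimator of $S_x=\sum_i x_i$ with variance $\mathrm{Var}(\hat S_x)=\frac{32}{3\varepsilon^2}$.
   Context: Let $\varepsilon_1=\varepsilon_2=\varepsilon/2$. Define the statistics $S_{x^2}=\sum_i x_i^2$, $S_{x-x^2}=\sum_i (x_i-x_i^2)$, $S_{1-x}=\sum_i(1-x_i)$, $S_{xy}=\sum_i x_iy_i$, $S_{(1-x)y}=\sum_i (1-x_i)y_i$, $S_{1-y}=\sum_i(1-y_i)$. Let $Z_{11},Z_{12},Z_{13}\stackrel{iid}{\sim}\mathrm{Lap}(1/\varepsilon_1)$ and $Z_{21},Z_{22},Z_{23}\stackrel{iid}{\sim}\mathrm{Lap}(1/\varepsilon_2)$, all six mutually independent, where $\mathrm{Lap}(b)$ is the zero-mean Laplace distribution with density $\frac{1}{2b}e^{-|z|/b}$. Set $\tilde S_{x^2}=S_{x^2}+Z_{11}$, $\tilde S_{x-x^2}=S_{x-x^2}+Z_{12}$, $\tilde S_{1-x}=S_{1-x}+Z_{13}$, $\tilde S_{xy}=S_{xy}+Z_{21}$, $\tilde S_{(1-x)y}=S_{(1-x)y}+Z_{22}$, $\tilde S_{1-y}=S_{1-y}+Z_{23}$,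 and $\tilde n_x=\tilde S_{x^2}+\tilde S_{x-x^2}+\tilde S_{1-x}$, $\tilde n_y=\tilde S_{xy}+\tilde S_{(1-x)y}+\tilde S_{1-y}$. The dataset is fixed; expectations and variances are over the noise. *)

theory Defs
  imports "HOL-Probability.Probability"
begin

definition laplace_density :: "real \<Rightarrow> real \<Rightarrow> real" where
  "laplace_density b z = exp (- \<bar>z\<bar> / b) / (2 * b)"

end

theory Submission
  imports Defs
begin

(* Both channels recover S_x exactly in the absence of noise: S_{x^2} + S_{x-x^2} = S_x and
   n_y - S_{1-x} = n - (n - S_x) = S_x.  Hence the estimator equals
   S_x + 2/3 (Z_11 + Z_12) + 1/3 (Z_21 + Z_22 + Z_23 - Z_13), a fixed number plus a linear
   combination of independent centred Laplace variables.  It is therefore unbiased, and its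
   variance is (sum of squared weights) * 2b^2 = 4/3 * 2b^2 with scale b = 2/epsilon. *)

lemma has_bochner_integral_laplace_moment:
  fixes b :: real and k :: nat
  assumes b: "0 < b"
  shows "has_bochner_integral lborel (\<lambda>z. laplace_density b z * z ^ k)
           (if even k then fact k * b ^ k else 0)"
proof -
  \<comment> \<open>Away from 0, the Laplace density is the mean of the exponential density and its mirror image.\<close>
  define h where "h z = erlang_density 0 (1 / b) z * z ^ k" for z
  have h_measurable[measurable]: "h \<in> borel_measurable borel"
    unfolding h_def erlang_density_def by measurable
  have h: "has_bochner_integral lborel h (fact k * b ^ k)"
  proof (rule has_bochner_integral_nn_integral)
    show "(\<integral>\<^sup>+z. ennreal (h z) \<partial>lborel) = ennreal (fact k * b ^ k)"
      using nn_integral_erlang_ith_moment[of "1 / b" 0 k] b by (simp add: h_def power_one_over)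
  qed (use b in \<open>auto simp: h_def erlang_density_def\<close>)
  have h_reflected: "has_bochner_integral lborel (\<lambda>z. h (- z)) (fact k * b ^ k)"
    using lborel_has_bochner_integral_real_affine_iff[of "-1" h _ 0] h by simp
  have "has_bochner_integral lborel (\<lambda>z. (h z + (-1) ^ k * h (- z)) / 2)
          ((fact k * b ^ k + (-1) ^ k * (fact k * b ^ k)) / 2)"
    by (intro has_bochner_integral_divide_zero has_bochner_integral_add
          has_bochner_integral_mult_right h h_reflected)
  moreover have "AE z in lborel. (h z + (-1) ^ k * h (- z)) / 2 = laplace_density b z * z ^ k"
    using AE_lborel_singleton[of 0]
  proof eventually_elim
    case (elim z)
    have sign: "(-1) ^ k * (- z) ^ k = z ^ k"
      by (metis power_mult_distrib mult_minus1 minus_minus)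
    show ?case
    proof (cases "z < 0")
      case True
      then show ?thesis
        by (simp add: h_def erlang_density_def laplace_density_def sign
            mult.left_commute[of "(-1) ^ k"])
    next
      case False
      with elim show ?thesis
        by (simp add: h_def erlang_density_def laplace_density_def)
    qed
  qed
  ultimately have "has_bochner_integral lborel (\<lambda>z. laplace_density b z * z ^ k)
      ((fact k * b ^ k + (-1) ^ k * (fact k * b ^ k)) / 2)"
    by (subst (asm) has_bochner_integral_cong_AE) (simp_all add: laplace_density_def)
  then show ?thesis
    by (auto simp: field_simps)
qed

lemma has_bochner_integral_laplace_distributed_moment:
  fixes X :: "'a \<Rightarrow> real" and b :: real and k :: nat
  assumes b: "0 < b" and X: "distributed M lborel X (\<lambda>z. ennreal (laplace_density b z))"
  shows "has_bochner_integral M (\<lambda>\<omega>. X \<omega> ^ k) (if even k then fact k * b ^ k else 0)"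
proof -
  have nonneg: "0 \<le> laplace_density b z" for z
    using b by (simp add: laplace_density_def)
  show ?thesis
    using has_bochner_integral_laplace_moment[OF b, of k] nonneg
      distributed_integrable[OF X, of "\<lambda>z. z ^ k"] distributed_integral[OF X, of "\<lambda>z. z ^ k"]
    by (auto simp: has_bochner_integral_iff)
qed

lemma (in prob_space) indep_vars_integral_mult:
  fixes X :: "'i \<Rightarrow> 'a \<Rightarrow> real"
  assumes indep: "indep_vars (\<lambda>_. borel) X I" and ij: "i \<in> I" "j \<in> I" "i \<noteq> j"
    and integrable: "integrable M (X i)" "integrable M (X j)"
  shows "integrable M (\<lambda>\<omega>. X i \<omega> * X j \<omega>)
    \<and> expectation (\<lambda>\<omega>. X i \<omega> * X j \<omega>) = expectation (X i) * expectation (X j)"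
proof -
  have indep_ij: "indep_vars (\<lambda>_. borel) X {i, j}"
    using indep_vars_subset[OF indep] ij by auto
  have "integrable M (\<lambda>\<omega>. \<Prod>k\<in>{i, j}. X k \<omega>)"
    by (rule indep_vars_integrable[OF _ indep_ij]) (use integrable in auto)
  moreover have "expectation (\<lambda>\<omega>. \<Prod>k\<in>{i, j}. X k \<omega>) = (\<Prod>k\<in>{i, j}. expectation (X k))"
    by (rule indep_vars_lebesgue_integral[OF _ indep_ij]) (use integrable in auto)
  ultimately show ?thesis
    using \<open>i \<noteq> j\<close> by simp
qed

lemma (in prob_space) expectation_square_indep_centered_sum:
  fixes X :: "'i \<Rightarrow> 'a \<Rightarrow> real"
  assumes "finite I" and indep: "indep_vars (\<lambda>_. borel) X I"
    and integrable: "\<And>i. i \<in> I \<Longrightarrow> integrable M (X i)"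
    and square_integrable: "\<And>i. i \<in> I \<Longrightarrow> integrable M (\<lambda>\<omega>. X i \<omega> ^ 2)"
    and centered: "\<And>i. i \<in> I \<Longrightarrow> expectation (X i) = 0"
  shows "integrable M (\<lambda>\<omega>. (\<Sum>i\<in>I. c i * X i \<omega>) ^ 2)
    \<and> expectation (\<lambda>\<omega>. (\<Sum>i\<in>I. c i * X i \<omega>) ^ 2)
        = (\<Sum>i\<in>I. c i ^ 2 * expectation (\<lambda>\<omega>. X i \<omega> ^ 2))"
proof -
  define m where "m i j = (if i = j then expectation (\<lambda>\<omega>. X i \<omega> ^ 2) else 0)" for i j
  have products: "integrable M (\<lambda>\<omega>. X i \<omega> * X j \<omega>)
      \<and> expectation (\<lambda>\<omega>. X i \<omega> * X j \<omega>) = m i j"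
    if "i \<in> I" "j \<in> I" for i j
  proof (cases "i = j")
    case True
    then show ?thesis
      using square_integrable[OF that(1)] by (simp add: m_def power2_eq_square)
  next
    case False
    then show ?thesis
      using indep_vars_integral_mult[OF indep that False] integrable that centered
      by (simp add: m_def)
  qed
  have square: "(\<Sum>i\<in>I. c i * X i \<omega>) ^ 2
      = (\<Sum>i\<in>I. \<Sum>j\<in>I. c i * c j * (X i \<omega> * X j \<omega>))" for \<omega>
    by (auto simp: power2_eq_square sum_product intro!: sum.cong)
  have "integrable M (\<lambda>\<omega>. \<Sum>i\<in>I. \<Sum>j\<in>I. c i * c j * (X i \<omega> * X j \<omega>))"
    using products by (intro Bochner_Integration.integrable_sum integrable_mult_right) auto
  moreover have "expectation (\<lambda>\<omega>. \<Sum>i\<in>I. \<Sum>j\<in>I. c i * c j * (X i \<omega> * X j \<omega>))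
      = (\<Sum>i\<in>I. \<Sum>j\<in>I. c i * c j * m i j)"
    using products by (simp add: Bochner_Integration.integral_sum integrable_mult_right)
  moreover have "(\<Sum>i\<in>I. \<Sum>j\<in>I. c i * c j * m i j)
      = (\<Sum>i\<in>I. c i ^ 2 * expectation (\<lambda>\<omega>. X i \<omega> ^ 2))"
    using \<open>finite I\<close> by (simp add: m_def power2_eq_square if_distrib cong: if_cong)
  ultimately show ?thesis
    by (simp add: square)
qed

lemma (in prob_space) variance_affine_indep_centered_sum:
  fixes X :: "'i \<Rightarrow> 'a \<Rightarrow> real" and a :: real and c :: "'i \<Rightarrow> real"
  assumes "finite I" and indep: "indep_vars (\<lambda>_. borel) X I"
    and integrable: "\<And>i. i \<in> I \<Longrightarrow> integrable M (X i)"
    and square_integrable: "\<And>i. i \<in> I \<Longrightarrow> integrable M (\<lambda>\<omega>. X i \<omega> ^ 2)"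
    and centered: "\<And>i. i \<in> I \<Longrightarrow> expectation (X i) = 0"
  defines "Y \<equiv> \<lambda>\<omega>. a + (\<Sum>i\<in>I. c i * X i \<omega>)"
  shows "integrable M Y \<and> expectation Y = a
    \<and> variance Y = (\<Sum>i\<in>I. c i ^ 2 * expectation (\<lambda>\<omega>. X i \<omega> ^ 2))"
proof -
  have noise_integrable: "integrable M (\<lambda>\<omega>. \<Sum>i\<in>I. c i * X i \<omega>)"
    using integrable by (intro Bochner_Integration.integrable_sum integrable_mult_right) auto
  have "expectation (\<lambda>\<omega>. \<Sum>i\<in>I. c i * X i \<omega>) = 0"
    using integrable centered by (simp add: Bochner_Integration.integral_sum)
  then have "expectation Y = a"
    using noise_integrable by (simp add: Y_def prob_space)
  then show ?thesis
    using noise_integrable expectation_square_indep_centered_sum[OF assms(1-5), of c]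
    by (simp add: Y_def)
qed

lemma (in prob_space) laplace_combined_estimator_moments:
  fixes Z :: "nat \<Rightarrow> nat \<Rightarrow> 'a \<Rightarrow> real"
    and b s s_x2 s_xmx2 s_1mx s_xy s_1mxy s_1my :: real
  assumes b: "0 < b"
    and indep: "indep_vars (\<lambda>_. borel) (\<lambda>(j, k). Z j k) ({1, 2} \<times> {1, 2, 3})"
    and laplace: "\<And>j k. j \<in> {1, 2} \<Longrightarrow> k \<in> {1, 2, 3} \<Longrightarrow>
                   distributed M lborel (Z j k) (\<lambda>z. ennreal (laplace_density b z))"
    and x_channel: "s_x2 + s_xmx2 = s"
    and y_channel: "s_xy + s_1mxy + s_1my - s_1mx = s"
  defines "hat \<equiv> \<lambda>\<omega>. 2 / 3 * ((s_x2 + Z 1 1 \<omega>) + (s_xmx2 + Z 1 2 \<omega>))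
                     + 1 / 3 * (((s_xy + Z 2 1 \<omega>) + (s_1mxy + Z 2 2 \<omega>) + (s_1my + Z 2 3 \<omega>))
                                - (s_1mx + Z 1 3 \<omega>))"
  shows "integrable M hat \<and> expectation hat = s \<and> variance hat = 8 * b ^ 2 / 3"
proof -
  define I where "I = {1, 2 :: nat} \<times> {1, 2, 3 :: nat}"
  define W where "W = (\<lambda>(j, k). Z j k)"
  define c where "c p = (if p = (1, 3) then - 1 / 3 else if fst p = 1 then 2 / 3 else 1 / 3 :: real)"
    for p :: "nat \<times> nat"
  have I_explicit: "I = {(1, 1), (1, 2), (1, 3), (2, 1), (2, 2), (2, 3)}"
    by (auto simp: I_def)
  have noise: "integrable M (W p) \<and> integrable M (\<lambda>\<omega>. W p \<omega> ^ 2)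
      \<and> expectation (W p) = 0 \<and> expectation (\<lambda>\<omega>. W p \<omega> ^ 2) = 2 * b ^ 2"
    if "p \<in> I" for p
  proof -
    obtain j k where p: "p = (j, k)" "j \<in> {1, 2}" "k \<in> {1, 2, 3}"
      using \<open>p \<in> I\<close> unfolding I_def by blast
    show ?thesis
      using has_bochner_integral_laplace_distributed_moment[OF b laplace[OF p(2,3)], of 1]
        has_bochner_integral_laplace_distributed_moment[OF b laplace[OF p(2,3)], of 2]
      by (simp add: p W_def has_bochner_integral_iff)
  qed
  have "indep_vars (\<lambda>_. borel) W I"
    using indep by (simp add: W_def I_def)
  from variance_affine_indep_centered_sum[OF _ this, of s c]
  have moments: "integrable M (\<lambda>\<omega>. s + (\<Sum>p\<in>I. c p * W p \<omega>))
      \<and> expectation (\<lambda>\<omega>. s + (\<Sum>p\<in>I. c p * W p \<omega>)) = s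
      \<and> variance (\<lambda>\<omega>. s + (\<Sum>p\<in>I. c p * W p \<omega>)) = 8 * b ^ 2 / 3"
    using noise by (simp add: I_explicit c_def power2_eq_square)
  have hat_eq: "hat = (\<lambda>\<omega>. s + (\<Sum>p\<in>I. c p * W p \<omega>))"
  proof
    fix \<omega>
    have "hat \<omega> = 2 / 3 * (s_x2 + s_xmx2) + 1 / 3 * (s_xy + s_1mxy + s_1my - s_1mx)
        + (2 / 3 * (Z 1 1 \<omega> + Z 1 2 \<omega>) + 1 / 3 * (Z 2 1 \<omega> + Z 2 2 \<omega> + Z 2 3 \<omega> - Z 1 3 \<omega>))"
      by (simp add: hat_def field_simps)
    also have "\<dots> = s + (\<Sum>p\<in>I. c p * W p \<omega>)"
      unfolding x_channel y_channel by (simp add: I_explicit W_def c_def field_simps)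
    finally show "hat \<omega> = s + (\<Sum>p\<in>I. c p * W p \<omega>)" .
  qed
  show ?thesis
    unfolding hat_eq by (rule moments)
qed

theorem mainTheorem11:
  fixes M :: "'a measure" and \<epsilon> :: real and n :: nat
    and x y :: "nat \<Rightarrow> real"
    and Z :: "nat \<Rightarrow> nat \<Rightarrow> 'a \<Rightarrow> real"
  assumes "prob_space M"
    and eps: "\<epsilon> > 0"
    and data: "\<And>i. i < n \<Longrightarrow> x i \<in> {0..1} \<and> y i \<in> {0..1}"
    and indep: "prob_space.indep_vars M (\<lambda>_. borel) (\<lambda>(j, k). Z j k) ({1, 2} \<times> {1, 2, 3})"
    and lap1: "\<And>k. k \<in> {1, 2, 3} \<Longrightarrow>
                 distributed M lborel (Z 1 k) (\<lambda>z. ennreal (laplace_density (1 / (\<epsilon> / 2)) z))"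
    and lap2: "\<And>k. k \<in> {1, 2, 3} \<Longrightarrow>
                 distributed M lborel (Z 2 k) (\<lambda>z. ennreal (laplace_density (1 / (\<epsilon> / 2)) z))"
  shows
    "let S_x2 = (\<Sum>i<n. x i ^ 2);
         S_xmx2 = (\<Sum>i<n. x i - x i ^ 2);
         S_1mx = (\<Sum>i<n. 1 - x i);
         S_xy = (\<Sum>i<n. x i * y i);
         S_1mxy = (\<Sum>i<n. (1 - x i) * y i);
         S_1my = (\<Sum>i<n. 1 - y i);
         tS_x2 = (\<lambda>\<omega>. S_x2 + Z 1 1 \<omega>);
         tS_xmx2 = (\<lambda>\<omega>. S_xmx2 + Z 1 2 \<omega>);
         tS_1mx = (\<lambda>\<omega>. S_1mx + Z 1 3 \<omega>);
         tS_xy = (\<lambda>\<omega>. S_xy + Z 2 1 \<omega>);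
         tS_1mxy = (\<lambda>\<omega>. S_1mxy + Z 2 2 \<omega>);
         tS_1my = (\<lambda>\<omega>. S_1my + Z 2 3 \<omega>);
         tn_y = (\<lambda>\<omega>. tS_xy \<omega> + tS_1mxy \<omega> + tS_1my \<omega>);
         hatS_x = (\<lambda>\<omega>. 2 / 3 * (tS_x2 \<omega> + tS_xmx2 \<omega>) + 1 / 3 * (tn_y \<omega> - tS_1mx \<omega>))
     in integrable M hatS_x
        \<and> prob_space.expectation M hatS_x = (\<Sum>i<n. x i)
        \<and> prob_space.variance M hatS_x = 32 / (3 * \<epsilon> ^ 2)"
proof -
  interpret prob_space M by fact
  have laplace: "distributed M lborel (Z j k) (\<lambda>z. ennreal (laplace_density (1 / (\<epsilon> / 2)) z))"
    if "j \<in> {1, 2}" "k \<in> {1, 2, 3}" for j k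
    using that lap1 lap2 by auto
  have x_channel: "(\<Sum>i<n. x i ^ 2) + (\<Sum>i<n. x i - x i ^ 2) = (\<Sum>i<n. x i)"
    by (simp add: sum_subtractf)
  have y_channel: "(\<Sum>i<n. x i * y i) + (\<Sum>i<n. (1 - x i) * y i) + (\<Sum>i<n. 1 - y i)
      - (\<Sum>i<n. 1 - x i) = (\<Sum>i<n. x i)"
    by (simp add: sum_subtractf algebra_simps)
  have scale: "0 < 1 / (\<epsilon> / 2)"
    using eps by simp
  have variance: "8 * (1 / (\<epsilon> / 2)) ^ 2 / 3 = 32 / (3 * \<epsilon> ^ 2)"
    by (simp add: field_simps power2_eq_square)
  show ?thesis
    using laplace_combined_estimator_moments[OF scale indep laplace x_channel y_channel]
    unfolding Let_def variance .
qed

end
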